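(* Let $d\ge 2$, let $s$ be a zero-mean complex random variable (possibly non-circular and non-Gaussian) with density $p_s$ satisfying standard regularity conditions, and let ${\bf z}$ be a zero-mean circular complex Gaussian random vector of dimension $d-1$ with nonsingular covariance ${\bf C}_{\bf z}={\rm E}[{\bf z}{\bf z}^H]$, independent of $s$. Consider $N$ i.i.d. observations of ${\bf x}={\bf A}{\bf v}$, ${\bf v}=[s;{\bf z}]$, where $$ {\bf A}=\begin{pmatrix}1 & {\bf h}^H\\ {\bf g} & {\bf g}{\bf h}^H-{\bf I}_{d-1}\end{pmatrix},\qquad {\bf A}^{-1}=\begin{pmatrix}{\bf w}^H\\ {\bf B}\end{pmatrix}=\begin{pmatrix}1-{\bf h}^H{\bf g} & {\bf h}^H\\ {\bf g} & -{\bf I}_{d-1}\end{pmatrix}, $$ with unknown parameters ${\bf h},{\bf g}\in\mathbb{C}^{d-1}$ and per-sample log-likelihood $\log p_s({\bf w}^H{\bf x})+\log p_{\bf z}({\bf B}{\bf x})$. Assume the true value has ${\bf h}={\bf 0}$ (${\bf g}$ arbitrary) and $\overline{\kappa}_s:=\sigma_s^2\kappa_s>1$. Then the Cramér–Rao lower bound for ${\bf h}$ (the ${\bf h}$-block of the inverse of the complex Fisher information matrix of the $N$ samples) is $$ \mathtt{CRLB}({\bf h})=\frac{1}{N}\,\frac{\sigma_s^2}{\kappa_s\sigma_s^2-1}\,{\bf C}_{\bf z}^{-1}, $$ and consequently $$ \frac{1}{\sigma_s^2}\,\mathrm{tr}\bigl({\bf C}_{\bf z}\,\mathtt{CRLB}({\bf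 h})\bigr)=\frac{1}{N}\,\frac{d-1}{\overline{\kappa}_s-1}. $$
   Context: Derivatives are Wirtinger derivatives. $\psi_s(s)=-\partial \ln p_s(s,s^* )/\partial s^*$, $\kappa_s={\rm E}[|\psi_s(s)|^2]$, $\sigma_s^2={\rm E}[|s|^2]$. A random vector ${\bf z}$ is circular if ${\rm E}[{\bf z}{\bf z}^T]={\bf 0}$. The per-sample complex Fisher information matrix of $\boldsymbol\theta=[{\bf h};{\bf g}]$ is $\mathcal{J}=\begin{pmatrix}{\bf F}&{\bf P}\\{\bf P}^*&{\bf F}^*\end{pmatrix}$ with ${\bf F}={\rm E}[\frac{\partial\mathcal{L}}{\partial\boldsymbol\theta^*}(\frac{\partial\mathcal{L}}{\partial\boldsymbol\theta^*})^H]$, ${\bf P}={\rm E}[\frac{\partial\mathcal{L}}{\partial\boldsymbol\theta^*}(\frac{\partial\mathcal{L}}{\partial\boldsymbol\theta^*})^T]$, $\mathcal{L}$ the per-sample log-likelihood; for $N$ i.i.d. samples the information is $N\mathcal{J}$. The quantity $\frac{1}{\sigma_s^2}\mathrm{tr}({\bf C}_{\bf z}\mathtt{CRLB}({\bf h}))$ is the Cramér–Rao-induced bound on the mean interference-to-signal ratio of the extracted signal. *)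

theory Defs
  imports "HOL-Probability.Probability"
begin

text \<open>Wirtinger derivative with respect to the conjugate variable:
  for f : C -> C real-differentiable at z with real-linear derivative D,
  df/dz* = (1/2)(df/dx + i df/dy) = (D 1 + i D i)/2.\<close>
definition wirt_conj :: "(complex \<Rightarrow> complex) \<Rightarrow> complex \<Rightarrow> complex" where
  "wirt_conj f z =
     (frechet_derivative f (at z) 1 + \<i> * frechet_derivative f (at z) \<i>) / 2"

definition wgrad :: "(complex^'m \<Rightarrow> real) \<Rightarrow> complex^'m \<Rightarrow> complex^'m" where
  "wgrad f t = (\<chi> k. wirt_conj
       (\<lambda>c. complex_of_real (f (\<chi> j. if j = k then c else t $ j))) (t $ k))"

definition hdot :: "complex^'n \<Rightarrow> complex^'n \<Rightarrow> complex" where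
  "hdot h v = (\<Sum>k\<in>UNIV. cnj (h $ k) * v $ k)"

definition psi :: "(complex \<Rightarrow> real) \<Rightarrow> complex \<Rightarrow> complex" where
  "psi ps u = - wirt_conj (\<lambda>u. complex_of_real (ln (ps u))) u"

definition herm_pd :: "complex^'n^'n \<Rightarrow> bool" where
  "herm_pd C \<longleftrightarrow> (\<forall>i j. C $ i $ j = cnj (C $ j $ i)) \<and>
     (\<forall>v. v \<noteq> 0 \<longrightarrow> Re (\<Sum>i\<in>UNIV. \<Sum>j\<in>UNIV. cnj (v $ i) * C $ i $ j * v $ j) > 0)"

text \<open>Density (w.r.t. Lebesgue measure on C^n = R^{2n}) of a zero-mean circular
  complex Gaussian vector with nonsingular covariance C.\<close>
definition cgauss_pdf :: "complex^'n^'n \<Rightarrow> complex^'n \<Rightarrow> real" where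
  "cgauss_pdf C y = exp (- Re (\<Sum>i\<in>UNIV. \<Sum>j\<in>UNIV. cnj (y $ i) * matrix_inv C $ i $ j * y $ j))
                    / (pi ^ CARD('n) * Re (det C))"

definition hpart :: "complex^('n + 'n) \<Rightarrow> complex^'n" where
  "hpart t = (\<chi> k. t $ Inl k)"
definition gpart :: "complex^('n + 'n) \<Rightarrow> complex^'n" where
  "gpart t = (\<chi> k. t $ Inr k)"
definition theta :: "complex^'n \<Rightarrow> complex^'n \<Rightarrow> complex^('n + 'n)" where
  "theta h g = (\<chi> k. case k of Inl i \<Rightarrow> h $ i | Inr i \<Rightarrow> g $ i)"

text \<open>Mixing x = A v with v = [s; z], A = [[1, h^H],[g, g h^H - I]].
  Observations are pairs (x_1, x_rest) in C x C^(d-1).\<close>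
definition mixA :: "complex^'n \<Rightarrow> complex^'n \<Rightarrow> complex \<Rightarrow> complex^'n \<Rightarrow> complex \<times> (complex^'n)" where
  "mixA h g s z = (s + hdot h z, s *s g + (hdot h z) *s g - z)"

text \<open>Per-sample log-likelihood  log p_s(w^H x) + log p_z(B x), with
  A^{-1} = [[1 - h^H g, h^H],[g, -I]].\<close>
definition loglik :: "(complex \<Rightarrow> real) \<Rightarrow> (complex^'n \<Rightarrow> real) \<Rightarrow> complex^('n+'n)
                      \<Rightarrow> complex \<times> (complex^'n) \<Rightarrow> real" where
  "loglik ps pz t x =
     (let h = hpart t; g = gpart t; x0 = fst x; x' = snd x in
        ln (ps ((1 - hdot h g) * x0 + hdot h x')) + ln (pz (x0 *s g - x')))"

definition fisherF :: "'a measure \<Rightarrow> (complex \<Rightarrow> real) \<Rightarrow> (complex^'n \<Rightarrow> real)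
     \<Rightarrow> complex^('n+'n) \<Rightarrow> ('a \<Rightarrow> complex \<times> (complex^'n)) \<Rightarrow> complex^('n+'n)^('n+'n)" where
  "fisherF M ps pz t0 X = (\<chi> i j. integral\<^sup>L M (\<lambda>\<omega>.
      wgrad (\<lambda>t. loglik ps pz t (X \<omega>)) t0 $ i * cnj (wgrad (\<lambda>t. loglik ps pz t (X \<omega>)) t0 $ j)))"

definition fisherP :: "'a measure \<Rightarrow> (complex \<Rightarrow> real) \<Rightarrow> (complex^'n \<Rightarrow> real)
     \<Rightarrow> complex^('n+'n) \<Rightarrow> ('a \<Rightarrow> complex \<times> (complex^'n)) \<Rightarrow> complex^('n+'n)^('n+'n)" where
  "fisherP M ps pz t0 X = (\<chi> i j. integral\<^sup>L M (\<lambda>\<omega>.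
      wgrad (\<lambda>t. loglik ps pz t (X \<omega>)) t0 $ i * wgrad (\<lambda>t. loglik ps pz t (X \<omega>)) t0 $ j))"

definition cfim :: "'m::finite itself \<Rightarrow> complex^'m^'m \<Rightarrow> complex^'m^'m \<Rightarrow> complex^('m+'m)^('m+'m)" where
  "cfim _ F P = (\<chi> a b. case (a, b) of
       (Inl i, Inl j) \<Rightarrow> F $ i $ j
     | (Inl i, Inr j) \<Rightarrow> P $ i $ j
     | (Inr i, Inl j) \<Rightarrow> cnj (P $ i $ j)
     | (Inr i, Inr j) \<Rightarrow> cnj (F $ i $ j))"

definition crlb_h :: "nat \<Rightarrow> complex^(('n+'n)+('n+'n))^(('n+'n)+('n+'n)) \<Rightarrow> complex^'n^'n" where
  "crlb_h N J = (\<chi> i j. matrix_inv (\<chi> a b. of_nat N * J $ a $ b) $ Inl (Inl i) $ Inl (Inl j))"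

end

(*
  At the true parameter h = 0 every component of the score factors into a function of s
  times a linear form in z: the h_k-component is cnj (psi s) * z_k and the g_k-component is
  - cnj s * (C^-1 z)_k.  By independence each entry of F and P is an s-moment times a
  z-moment.  The z-moments E[z z^T] vanish because the circular Gaussian density is
  invariant under z |-> i z, so P = 0; the remaining moments are kappa, sigma^2, C, and
  E[cnj s * psi s] = 1, which is integration by parts (the regularity hypothesis).  Hence
  F = [[kappa C, -I], [-I, sigma^2 C^-1]], the augmented information is block diagonal, and
  the h-block of its inverse is the Schur complement formula sigma^2 / (kappa sigma^2 - 1) C^-1.
*)
theory Submission
  imports Defs
begin

section \<open>Wirtinger derivatives and the score function\<close>

lemma wirt_conj_eq_derivative:
  assumes "(f has_derivative D) (at z)"
  shows "wirt_conj f z = (D 1 + \<i> * D \<i>) / 2"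
  using frechet_derivative_at[OF assms] unfolding wirt_conj_def by simp

lemma wirt_conj_eqI:
  assumes "(f has_derivative (\<lambda>h. complex_of_real (2 * Re (cnj h * V)))) (at z)"
  shows "wirt_conj f z = V"
  using wirt_conj_eq_derivative[OF assms] by (simp add: complex_eq_iff)

lemma real_derivative_eq_wirt_conj:
  fixes f :: "complex \<Rightarrow> real"
  assumes "(f has_derivative D) (at u)"
  shows "D w = 2 * Re (cnj w * wirt_conj (\<lambda>u. complex_of_real (f u)) u)"
proof -
  interpret bounded_linear D
    using assms by (rule has_derivative_bounded_linear)
  have "w = Re w *\<^sub>R 1 + Im w *\<^sub>R \<i>"
    by (simp add: complex_eq_iff)
  then have "D w = D (Re w *\<^sub>R 1 + Im w *\<^sub>R \<i>)"
    by simp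
  also have "\<dots> = Re w * D 1 + Im w * D \<i>"
    by (simp add: add scaleR)
  finally show ?thesis
    unfolding wirt_conj_eq_derivative[OF has_derivative_of_real[OF assms]] by simp
qed

lemma density_derivative_eq_psi:
  assumes "ps u > 0" and "ps differentiable (at u)"
  shows "frechet_derivative ps (at u) w = - 2 * ps u * Re (cnj w * psi ps u)"
proof -
  have "(ps has_derivative frechet_derivative ps (at u)) (at u)"
    using assms(2) by (simp add: frechet_derivative_works)
  then have "((\<lambda>u. ln (ps u)) has_derivative (\<lambda>h. frechet_derivative ps (at u) h * inverse (ps u))) (at u)"
    by (intro has_derivative_ln assms(1))
  from real_derivative_eq_wirt_conj[OF this, of w] show ?thesis
    using assms(1) by (simp add: psi_def field_simps)
qed

lemma wirt_conj_density_times_cnj: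
  assumes "ps u > 0" and "ps differentiable (at u)"
  shows "wirt_conj (\<lambda>u. complex_of_real (ps u) * cnj u) u = of_real (ps u) * (1 - cnj u * psi ps u)"
proof -
  let ?D = "frechet_derivative ps (at u)"
  have "(ps has_derivative ?D) (at u)"
    using assms(2) by (simp add: frechet_derivative_works)
  then have "((\<lambda>u. complex_of_real (ps u) * cnj u) has_derivative
      (\<lambda>h. of_real (ps u) * cnj h + of_real (?D h) * cnj u)) (at u)"
    by (auto intro!: derivative_eq_intros simp: algebra_simps)
  from wirt_conj_eq_derivative[OF this] show ?thesis
    using density_derivative_eq_psi[OF assms, of 1] density_derivative_eq_psi[OF assms, of \<i>]
    by (simp add: complex_eq_iff algebra_simps)
qed

section \<open>Hermitian forms and matrix inverses\<close>

lemma hdot_0_left [simp]: "hdot 0 v = 0"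
  by (simp add: hdot_def)

lemma hdot_axis_left [simp]: "hdot (axis k c) v = cnj c * v $ k"
proof -
  have "hdot (axis k c) v = (\<Sum>j\<in>UNIV. if j = k then cnj c * v $ k else 0)"
    unfolding hdot_def by (rule sum.cong) (auto simp: axis_def)
  then show ?thesis
    by simp
qed

lemma bounded_linear_axis: "bounded_linear (axis k :: complex \<Rightarrow> complex^'n)"
  unfolding linear_conv_bounded_linear[symmetric]
  by (rule linearI) (simp_all add: axis_def vec_eq_iff)

definition hermitian :: "complex^'n^'n \<Rightarrow> bool" where
  "hermitian A \<longleftrightarrow> (\<forall>i j. A $ i $ j = cnj (A $ j $ i))"

lemma hermitian_cnj:
  assumes "hermitian A"
  shows "cnj (A $ i $ j) = A $ j $ i"
  using assms unfolding hermitian_def by (metis complex_cnj_cnj)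

lemma hermitian_mat_1: "hermitian (mat 1)"
  by (simp add: hermitian_def mat_def)

lemma hdot_hermitian_swap:
  assumes "hermitian Q"
  shows "hdot y (Q *v h) = cnj (hdot h (Q *v y))"
proof -
  have "hdot y (Q *v h) = (\<Sum>i\<in>UNIV. \<Sum>j\<in>UNIV. cnj (y $ i) * Q $ i $ j * h $ j)"
    by (simp add: hdot_def matrix_vector_mult_def sum_distrib_left mult.assoc)
  also have "\<dots> = (\<Sum>j\<in>UNIV. \<Sum>i\<in>UNIV. cnj (y $ i) * Q $ i $ j * h $ j)"
    by (rule sum.swap)
  also have "\<dots> = cnj (hdot h (Q *v y))"
    using hermitian_cnj[OF assms] by (simp add: hdot_def matrix_vector_mult_def sum_distrib_left mult_ac)
  finally show ?thesis .
qed

lemma hdot_column_hermitian: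
  assumes "hermitian A"
  shows "hdot (column k A) v = (A *v v) $ k"
  using hermitian_cnj[OF assms] by (simp add: hdot_def column_def matrix_vector_mult_def)

lemma hdot_column_mult_column:
  assumes "hermitian A"
  shows "hdot (column k A) (C *v column l B) = (A ** C ** B) $ k $ l"
  by (simp add: hdot_column_hermitian[OF assms] matrix_vector_mul_assoc)
    (simp add: matrix_vector_mult_def column_def matrix_matrix_mult_def)

lemma has_derivative_hermitian_form:
  fixes Q :: "complex^'n^'n"
  assumes "hermitian Q"
  shows "((\<lambda>y. Re (hdot y (Q *v y))) has_derivative (\<lambda>h. 2 * Re (hdot h (Q *v y)))) (at y)"
proof -
  have "((\<lambda>y. hdot y (Q *v y)) has_derivative (\<lambda>h. hdot h (Q *v y) + hdot y (Q *v h))) (at y)"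
    unfolding hdot_def matrix_vector_mult_def vec_lambda_beta
    by (rule derivative_eq_intros refl bounded_linear_imp_has_derivative bounded_linear_vec_nth | simp)+
       (simp add: sum.distrib algebra_simps)
  then have "((\<lambda>y. Re (hdot y (Q *v y))) has_derivative (\<lambda>h. Re (hdot h (Q *v y) + hdot y (Q *v h)))) (at y)"
    by (rule has_derivative_Re)
  moreover have "Re (hdot h (Q *v y) + hdot y (Q *v h)) = 2 * Re (hdot h (Q *v y))" for h
    unfolding hdot_hermitian_swap[OF assms, of y h] by simp
  ultimately show ?thesis
    by simp
qed

lemma invertible_matrix_inv:
  assumes "invertible A"
  shows "A ** matrix_inv A = mat 1" and "matrix_inv A ** A = mat 1"
  using someI_ex[OF assms[unfolded invertible_def]] by (simp_all add: matrix_inv_def)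

lemma matrix_inv_eqI:
  fixes A B :: "'a::field^'n^'n"
  assumes "A ** B = mat 1"
  shows "matrix_inv A = B"
proof -
  have "invertible A"
    using assms invertible_right_inverse by blast
  then have "matrix_inv A = matrix_inv A ** (A ** B)"
    using assms by simp
  also have "\<dots> = B"
    using invertible_matrix_inv(2)[OF \<open>invertible A\<close>] by (simp add: matrix_mul_assoc)
  finally show ?thesis .
qed

lemma map_matrix_cnj_mult: "map_matrix cnj (A ** B) = map_matrix cnj A ** map_matrix cnj B"
  by (simp add: vec_eq_iff matrix_matrix_mult_def)

lemma map_matrix_cnj_mat_1 [simp]: "map_matrix cnj (mat 1) = mat 1"
  by (simp add: vec_eq_iff mat_def)

lemma hermitian_matrix_inv:
  fixes C :: "complex^'n^'n"
  assumes "hermitian C" and "invertible C"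
  shows "hermitian (matrix_inv C)"
proof -
  let ?Q = "matrix_inv C"
  have "C ** (\<chi> i j. cnj (?Q $ j $ i)) = map_matrix cnj (transpose (?Q ** C))"
    using hermitian_cnj[OF assms(1)]
    by (simp add: vec_eq_iff matrix_matrix_mult_def transpose_def mult.commute)
  also have "\<dots> = mat 1"
    by (simp add: invertible_matrix_inv(2)[OF assms(2)])
  finally have "?Q = (\<chi> i j. cnj (?Q $ j $ i))"
    by (rule matrix_inv_eqI)
  then show ?thesis
    unfolding hermitian_def by (metis vec_lambda_beta)
qed

lemma herm_pd_hermitian: "herm_pd C \<Longrightarrow> hermitian C"
  unfolding herm_pd_def hermitian_def by (rule conjunct1)

lemma herm_pd_form_pos:
  assumes "herm_pd C" and "v \<noteq> 0"
  shows "Re (hdot v (C *v v)) > 0"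
proof -
  have "hdot v (C *v v) = (\<Sum>i\<in>UNIV. \<Sum>j\<in>UNIV. cnj (v $ i) * C $ i $ j * v $ j)"
    by (simp add: hdot_def matrix_vector_mult_def sum_distrib_left mult.assoc)
  moreover have "\<forall>v. v \<noteq> 0 \<longrightarrow> Re (\<Sum>i\<in>UNIV. \<Sum>j\<in>UNIV. cnj (v $ i) * C $ i $ j * v $ j) > 0"
    using assms(1) unfolding herm_pd_def by (rule conjunct2)
  ultimately show ?thesis
    using assms(2) by simp
qed

lemma herm_pd_invertible:
  fixes C :: "complex^'n^'n"
  assumes "herm_pd C"
  shows "invertible C"
proof -
  have "x = 0" if "C *v x = 0" for x
    using herm_pd_form_pos[OF assms, of x] that by (cases "x = 0") (simp_all add: hdot_def)
  then show ?thesis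
    using matrix_left_invertible_ker invertible_left_inverse by blast
qed

lemma herm_pd_diag_pos:
  assumes "herm_pd C"
  shows "Re (C $ i $ i) > 0"
proof -
  have "(C *v axis i 1) $ i = C $ i $ i"
    by (simp add: matrix_vector_mult_def axis_def if_distrib cong: if_cong)
  then show ?thesis
    using herm_pd_form_pos[OF assms, of "axis i 1"] by simp
qed

lemma trace_mult_scaleR_inverse:
  fixes C Q :: "complex^'n^'n"
  assumes "C ** Q = mat 1"
  shows "trace (C ** (c *\<^sub>R Q)) = of_real (c * real CARD('n))"
  using assms by (simp add: matrix_scalar_ac scalar_matrix_assoc[symmetric] trace_def mat_def
      scaleR_conv_of_real[where 'a = complex])

section \<open>Block matrices\<close>

lemma matrix_mul_minus_left [simp]: "(- A) ** B = - (A ** (B :: 'a::ring_1^_^_))"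
  by (simp add: vec_eq_iff matrix_matrix_mult_def sum_negf)

lemma matrix_mul_minus_right [simp]: "A ** (- B) = - (A ** (B :: 'a::ring_1^_^_))"
  by (simp add: vec_eq_iff matrix_matrix_mult_def sum_negf)

definition block_matrix ::
  "'a^'n^'m \<Rightarrow> 'a^'k^'m \<Rightarrow> 'a^'n^'l \<Rightarrow> 'a^'k^'l \<Rightarrow> 'a^('n + 'k)^('m + 'l)" where
  "block_matrix A B C D = (\<chi> a b. case a of
      Inl i \<Rightarrow> (case b of Inl j \<Rightarrow> A $ i $ j | Inr j \<Rightarrow> B $ i $ j)
    | Inr i \<Rightarrow> (case b of Inl j \<Rightarrow> C $ i $ j | Inr j \<Rightarrow> D $ i $ j))"

lemma block_matrix_nth [simp]:
  "block_matrix A B C D $ Inl i $ Inl j = A $ i $ j"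
  "block_matrix A B C D $ Inl i $ Inr j = B $ i $ j"
  "block_matrix A B C D $ Inr i $ Inl j = C $ i $ j"
  "block_matrix A B C D $ Inr i $ Inr j = D $ i $ j"
  by (simp_all add: block_matrix_def)

lemma sum_UNIV_Plus:
  "sum f (UNIV :: ('a::finite + 'b::finite) set) = (\<Sum>i\<in>UNIV. f (Inl i)) + (\<Sum>i\<in>UNIV. f (Inr i))"
  by (subst UNIV_Plus_UNIV[symmetric], subst sum.Plus) (auto simp: comp_def)

lemma block_matrix_mult:
  fixes A :: "'a::semiring_1^'n^'m"
  shows "block_matrix A B C D ** block_matrix A' B' C' D'
    = block_matrix (A ** A' + B ** C') (A ** B' + B ** D') (C ** A' + D ** C') (C ** B' + D ** D')"
  by (simp add: vec_eq_iff matrix_matrix_mult_def block_matrix_def sum_UNIV_Plus split: sum.split)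

lemma block_matrix_mat_1:
  "block_matrix (mat 1) 0 0 (mat 1) = (mat 1 :: 'a::zero_neq_one^('n::finite + 'k::finite)^('n + 'k))"
  by (simp add: vec_eq_iff block_matrix_def mat_def split: sum.split)

lemma scaleR_block_matrix:
  "r *\<^sub>R block_matrix A B C D = block_matrix (r *\<^sub>R A) (r *\<^sub>R B) (r *\<^sub>R C) (r *\<^sub>R D)"
  by (simp add: vec_eq_iff block_matrix_def split: sum.split)

lemma matrix_inv_block_diagonal:
  fixes A A' :: "'a::field^'n^'n" and D D' :: "'a^'k^'k"
  assumes "A ** A' = mat 1" and "D ** D' = mat 1"
  shows "matrix_inv (block_matrix A 0 0 D) = block_matrix A' 0 0 D'"
  by (rule matrix_inv_eqI) (simp add: block_matrix_mult assms block_matrix_mat_1)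

lemma block_matrix_inverse:
  fixes C Q :: "'a::real_algebra_1^'n^'n"
  assumes "C ** Q = mat 1" and "Q ** C = mat 1" and "\<alpha> * \<beta> \<noteq> 1"
  shows "block_matrix (\<alpha> *\<^sub>R C) (- mat 1) (- mat 1) (\<beta> *\<^sub>R Q)
      ** ((1 / (\<alpha> * \<beta> - 1)) *\<^sub>R block_matrix (\<beta> *\<^sub>R Q) (mat 1) (mat 1) (\<alpha> *\<^sub>R C)) = mat 1"
proof -
  have "block_matrix (\<alpha> *\<^sub>R C) (- mat 1) (- mat 1) (\<beta> *\<^sub>R Q)
      ** block_matrix (\<beta> *\<^sub>R Q) (mat 1) (mat 1) (\<alpha> *\<^sub>R C)
      = (\<alpha> * \<beta> - 1) *\<^sub>R block_matrix (mat 1) 0 0 (mat 1)"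
    using assms(1,2)
    by (simp add: block_matrix_mult scaleR_block_matrix matrix_scalar_ac scalar_matrix_assoc[symmetric]
        algebra_simps)
  moreover have "\<alpha> * \<beta> - 1 \<noteq> 0"
    using assms(3) by simp
  ultimately show ?thesis
    by (simp add: matrix_scalar_ac scalar_matrix_assoc[symmetric] block_matrix_mat_1)
qed

lemma cfim_eq_block_matrix:
  "cfim TYPE('m::finite) F P = block_matrix F P (map_matrix cnj P) (map_matrix cnj F)"
  by (simp add: vec_eq_iff cfim_def block_matrix_def split: sum.split)

lemma crlb_h_circular:
  fixes F G :: "complex^('n::finite + 'n)^('n + 'n)"
  assumes "F ** G = mat 1" and "N > 0"
  shows "crlb_h N (cfim TYPE('n + 'n) F 0) = (\<chi> i j. G $ Inl i $ Inl j / of_nat N)"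
proof -
  have "(\<chi> a b. of_nat N * cfim TYPE('n + 'n) F 0 $ a $ b)
      = block_matrix (real N *\<^sub>R F) 0 0 (real N *\<^sub>R map_matrix cnj F)"
    by (simp add: vec_eq_iff cfim_eq_block_matrix block_matrix_def split: sum.split)
       (simp add: scaleR_conv_of_real)
  moreover have "(real N *\<^sub>R F) ** ((1 / real N) *\<^sub>R G) = mat 1"
    and "(real N *\<^sub>R map_matrix cnj F) ** ((1 / real N) *\<^sub>R map_matrix cnj G) = mat 1"
    using assms by (simp_all add: matrix_scalar_ac scalar_matrix_assoc flip: map_matrix_cnj_mult)
  ultimately show ?thesis
    by (simp add: crlb_h_def matrix_inv_block_diagonal vec_eq_iff) (simp add: scaleR_conv_of_real)
qed

section \<open>The score at the true parameter\<close>

lemma theta_nth [simp]: "theta h g $ Inl k = h $ k" "theta h g $ Inr k = g $ k"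
  by (simp_all add: theta_def)

lemma hpart_theta [simp]: "hpart (theta h g) = h"
  by (simp add: hpart_def theta_def vec_eq_iff)

lemma gpart_theta [simp]: "gpart (theta h g) = g"
  by (simp add: gpart_def theta_def vec_eq_iff)

lemma theta_update_Inl:
  "(\<chi> j. if j = Inl k then c else theta h g $ j) = theta (h + axis k (c - h $ k)) g"
  by (simp add: theta_def axis_def vec_eq_iff split: sum.split)

lemma theta_update_Inr:
  "(\<chi> j. if j = Inr k then c else theta h g $ j) = theta h (g + axis k (c - g $ k))"
  by (simp add: theta_def axis_def vec_eq_iff split: sum.split)

lemma ln_cgauss_pdf:
  fixes C :: "complex^'n^'n"
  assumes "Re (det C) > 0"
  shows "ln (cgauss_pdf C y) = - Re (hdot y (matrix_inv C *v y)) - ln (pi ^ CARD('n) * Re (det C))"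
proof -
  have "(\<Sum>i\<in>UNIV. \<Sum>j\<in>UNIV. cnj (y $ i) * matrix_inv C $ i $ j * y $ j) = hdot y (matrix_inv C *v y)"
    by (simp add: hdot_def matrix_vector_mult_def sum_distrib_left mult.assoc)
  then show ?thesis
    using assms by (simp add: cgauss_pdf_def ln_div)
qed

lemma wgrad_loglik_Inl:
  assumes "ps s0 > 0" and "ps differentiable (at s0)"
  shows "wgrad (\<lambda>t. loglik ps pz t (mixA 0 g0 s0 z0)) (theta 0 g0) $ Inl k = cnj (psi ps s0) * z0 $ k"
proof -
  let ?D = "frechet_derivative ps (at s0)"
  have loglik_eq: "loglik ps pz (theta (axis k c) g0) (mixA 0 g0 s0 z0)
      = ln (ps (s0 - cnj c * z0 $ k)) + ln (pz z0)" for c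
    by (simp add: loglik_def mixA_def algebra_simps)
  have "((\<lambda>c. s0 - cnj c * z0 $ k) has_derivative (\<lambda>h. - (cnj h * z0 $ k))) (at 0)"
    by (auto intro!: derivative_eq_intros)
  moreover have "(ps has_derivative ?D) (at (s0 - cnj 0 * z0 $ k))"
    using assms(2) by (simp add: frechet_derivative_works)
  ultimately have "((\<lambda>c. ps (s0 - cnj c * z0 $ k)) has_derivative (\<lambda>h. ?D (- (cnj h * z0 $ k)))) (at 0)"
    by (rule has_derivative_compose)
  then have "((\<lambda>c. complex_of_real (ln (ps (s0 - cnj c * z0 $ k)) + ln (pz z0))) has_derivative
      (\<lambda>h. of_real (?D (- (cnj h * z0 $ k)) * inverse (ps s0)))) (at 0)"
    using assms(1) by (auto intro!: derivative_eq_intros)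
  moreover have "?D (- (cnj h * z0 $ k)) * inverse (ps s0) = 2 * Re (cnj h * (cnj (psi ps s0) * z0 $ k))" for h
    using density_derivative_eq_psi[OF assms, of "- (cnj h * z0 $ k)"] assms(1)
    by (simp add: field_simps)
  ultimately have "wirt_conj (\<lambda>c. complex_of_real (ln (ps (s0 - cnj c * z0 $ k)) + ln (pz z0))) 0
      = cnj (psi ps s0) * z0 $ k"
    by (intro wirt_conj_eqI) simp
  then show ?thesis
    by (simp add: wgrad_def theta_update_Inl loglik_eq)
qed

lemma wgrad_loglik_Inr:
  fixes C :: "complex^'n^'n"
  assumes "Re (det C) > 0" and "hermitian (matrix_inv C)"
  shows "wgrad (\<lambda>t. loglik ps (cgauss_pdf C) t (mixA 0 g0 s0 z0)) (theta 0 g0) $ Inr k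
      = - cnj s0 * (matrix_inv C *v z0) $ k"
proof -
  define Q where "Q = matrix_inv C"
  define y where "y c = z0 + axis k (s0 * (c - g0 $ k))" for c
  define L where "L c = ln (ps s0) - Re (hdot (y c) (Q *v y c)) - ln (pi ^ CARD('n) * Re (det C))" for c
  have loglik_eq: "loglik ps (cgauss_pdf C) (theta 0 (g0 + axis k (c - g0 $ k))) (mixA 0 g0 s0 z0) = L c"
    for c
  proof -
    have "s0 *s (g0 + axis k (c - g0 $ k)) - (s0 *s g0 - z0) = y c"
      by (simp add: y_def axis_def vec_eq_iff algebra_simps)
    then show ?thesis
      by (simp add: loglik_def mixA_def ln_cgauss_pdf[OF assms(1)] Q_def L_def)
  qed
  have "((\<lambda>c. s0 * (c - g0 $ k)) has_derivative (\<lambda>h. s0 * h)) (at (g0 $ k))"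
    by (auto intro!: derivative_eq_intros)
  then have "((\<lambda>c. axis k (s0 * (c - g0 $ k))) has_derivative (\<lambda>h. axis k (s0 * h))) (at (g0 $ k))"
    by (rule bounded_linear.has_derivative[OF bounded_linear_axis])
  then have "(y has_derivative (\<lambda>h. axis k (s0 * h))) (at (g0 $ k))"
    unfolding y_def using has_derivative_add[OF has_derivative_const] by fastforce
  moreover have "y (g0 $ k) = z0"
    by (simp add: y_def)
  ultimately have "((\<lambda>c. Re (hdot (y c) (Q *v y c))) has_derivative
      (\<lambda>h. 2 * Re (hdot (axis k (s0 * h)) (Q *v z0)))) (at (g0 $ k))"
    using has_derivative_compose[OF _ has_derivative_hermitian_form[OF assms(2)[folded Q_def]]]
    by fastforce
  then have "((\<lambda>c. complex_of_real (L c)) has_derivative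
      (\<lambda>h. complex_of_real (0 - 2 * Re (hdot (axis k (s0 * h)) (Q *v z0)) - 0))) (at (g0 $ k))"
    unfolding L_def by (intro has_derivative_of_real has_derivative_diff has_derivative_const)
  then have "((\<lambda>c. complex_of_real (L c)) has_derivative
      (\<lambda>h. complex_of_real (2 * Re (cnj h * (- cnj s0 * (Q *v z0) $ k))))) (at (g0 $ k))"
    by (rule has_derivative_eq_rhs) (simp add: fun_eq_iff algebra_simps)
  then show ?thesis
    unfolding wgrad_def vec_lambda_beta theta_update_Inr loglik_eq theta_nth Q_def[symmetric]
    by (rule wirt_conj_eqI)
qed

definition src_score :: "(complex \<Rightarrow> real) \<Rightarrow> 'n + 'n \<Rightarrow> complex \<Rightarrow> complex" where
  "src_score ps i u = (case i of Inl _ \<Rightarrow> cnj (psi ps u) | Inr _ \<Rightarrow> - cnj u)"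

definition noise_dir :: "complex^'n^'n \<Rightarrow> 'n + 'n \<Rightarrow> complex^'n" where
  "noise_dir Q i = (case i of Inl k \<Rightarrow> column k (mat 1) | Inr k \<Rightarrow> column k Q)"

lemma wgrad_loglik_at_true:
  fixes C :: "complex^'n^'n"
  assumes "ps s0 > 0" and "ps differentiable (at s0)"
    and "Re (det C) > 0" and "hermitian (matrix_inv C)"
  shows "wgrad (\<lambda>t. loglik ps (cgauss_pdf C) t (mixA 0 g0 s0 z0)) (theta 0 g0) $ i
      = src_score ps i s0 * hdot (noise_dir (matrix_inv C) i) z0"
  by (cases i) (simp_all add: wgrad_loglik_Inl wgrad_loglik_Inr assms src_score_def noise_dir_def
      hdot_column_hermitian hermitian_mat_1)

lemma noise_dir_gram:
  assumes "C ** Q = mat 1" and "Q ** C = mat 1" and "hermitian Q"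
  shows "hdot (noise_dir Q i) (C *v noise_dir Q j) = block_matrix C (mat 1) (mat 1) Q $ i $ j"
  by (cases i; cases j) (simp_all add: noise_dir_def hdot_column_mult_column hermitian_mat_1 assms)

section \<open>Probabilistic tools\<close>

lemma borel_measurable_cnj [measurable]: "(cnj :: complex \<Rightarrow> complex) \<in> borel_measurable borel"
  by (intro borel_measurable_continuous_onI continuous_intros)

lemma borel_measurable_vec_nth [measurable]:
  "(\<lambda>x::'a::real_normed_vector^'n. x $ i) \<in> borel_measurable borel"
  by (intro borel_measurable_continuous_onI continuous_intros)

lemma borel_measurable_vector_scalar_mult [measurable]:
  "(\<lambda>y::complex^'n. c *s y) \<in> borel_measurable borel"
proof -
  have "(\<lambda>y::complex^'n. c *s y) = (\<lambda>y. \<chi> j. c * y $ j)"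
    by (simp add: fun_eq_iff vec_eq_iff)
  then show ?thesis
    by (simp add: borel_measurable_continuous_onI continuous_intros)
qed

lemma borel_measurable_hdot [measurable]: "hdot w \<in> borel_measurable borel"
  unfolding hdot_def by (intro borel_measurable_continuous_onI continuous_intros)

lemma distributed_integral_complex:
  fixes X :: "'a \<Rightarrow> 'b::euclidean_space" and h :: "'b \<Rightarrow> complex"
  assumes "distributed M lborel X (\<lambda>x. ennreal (f x))" and "\<And>x. 0 \<le> f x"
    and "h \<in> borel_measurable borel"
  shows "(\<integral>\<omega>. h (X \<omega>) \<partial>M) = (\<integral>x. f x *\<^sub>R h x \<partial>lborel)"
    and "integrable M (\<lambda>\<omega>. h (X \<omega>)) \<longleftrightarrow> integrable lborel (\<lambda>x. f x *\<^sub>R h x)"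
proof -
  have X: "X \<in> measurable M lborel" and f: "f \<in> borel_measurable lborel"
    using distributed_measurable[OF assms(1)] distributed_real_measurable[OF _ assms(1)] assms(2)
    by simp_all
  have h: "h \<in> borel_measurable lborel"
    using assms(3) by simp
  note distr_eq = distributed_distr_eq_density[OF assms(1), symmetric]
  show "(\<integral>\<omega>. h (X \<omega>) \<partial>M) = (\<integral>x. f x *\<^sub>R h x \<partial>lborel)"
    using integral_distr[OF X h] integral_density[OF h f] assms(2) by (simp add: distr_eq)
  show "integrable M (\<lambda>\<omega>. h (X \<omega>)) \<longleftrightarrow> integrable lborel (\<lambda>x. f x *\<^sub>R h x)"
    using integrable_distr_eq[OF X h] integrable_density[OF h f] assms(2) by (simp add: distr_eq)
qed

lemma integrable_mult_square_integrable:
  fixes x y :: "'a \<Rightarrow> complex"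
  assumes "integrable M (\<lambda>\<omega>. (cmod (x \<omega>))\<^sup>2)" and "integrable M (\<lambda>\<omega>. (cmod (y \<omega>))\<^sup>2)"
    and "x \<in> borel_measurable M" and "y \<in> borel_measurable M"
  shows "integrable M (\<lambda>\<omega>. x \<omega> * y \<omega>)"
proof (rule Bochner_Integration.integrable_bound)
  show "integrable M (\<lambda>\<omega>. (cmod (x \<omega>))\<^sup>2 + (cmod (y \<omega>))\<^sup>2)"
    using assms(1,2) by simp
  have "cmod (x \<omega>) * cmod (y \<omega>) \<le> (cmod (x \<omega>))\<^sup>2 + (cmod (y \<omega>))\<^sup>2" for \<omega>
    using sum_squares_bound[of "cmod (x \<omega>)" "cmod (y \<omega>)"]
      mult_nonneg_nonneg[OF norm_ge_zero norm_ge_zero, of "x \<omega>" "y \<omega>"]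
    by linarith
  then show "AE \<omega> in M. norm (x \<omega> * y \<omega>) \<le> norm ((cmod (x \<omega>))\<^sup>2 + (cmod (y \<omega>))\<^sup>2)"
    by (simp add: norm_mult)
qed (use assms(3,4) in simp)

lemma integral_mult_cnj_self:
  "(\<integral>\<omega>. f \<omega> * cnj (f \<omega>) \<partial>M) = of_real (\<integral>\<omega>. (cmod (f \<omega>))\<^sup>2 \<partial>M)"
proof -
  have "(\<lambda>\<omega>. f \<omega> * cnj (f \<omega>)) = (\<lambda>\<omega>. complex_of_real ((cmod (f \<omega>))\<^sup>2))"
    by (simp only: complex_norm_square)
  then show ?thesis
    by (simp only: integral_complex_of_real)
qed

lemma (in prob_space) indep_var_compose_rectI:
  assumes X: "random_variable S X" and Y: "random_variable T Y"
    and f: "f \<in> measurable S N" and g: "g \<in> measurable T N"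
    and rect: "\<And>A B. A \<in> sets S \<Longrightarrow> B \<in> sets T \<Longrightarrow>
      prob {\<omega>\<in>space M. X \<omega> \<in> A \<and> Y \<omega> \<in> B}
        = prob {\<omega>\<in>space M. X \<omega> \<in> A} * prob {\<omega>\<in>space M. Y \<omega> \<in> B}"
  shows "indep_var N (\<lambda>\<omega>. f (X \<omega>)) N (\<lambda>\<omega>. g (Y \<omega>))"
proof -
  let ?X = "\<lambda>\<omega>. f (X \<omega>)" and ?Y = "\<lambda>\<omega>. g (Y \<omega>)"
  have fX: "random_variable N ?X" and gY: "random_variable N ?Y"
    using measurable_compose X Y f g by blast+
  let ?SX = "{?X -` A \<inter> space M | A. A \<in> sets N}"
  let ?SY = "{?Y -` B \<inter> space M | B. B \<in> sets N}"
  have "indep_set ?SX ?SY"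
    unfolding indep_sets2_eq
  proof (intro conjI ballI)
    show "?SX \<subseteq> events" "?SY \<subseteq> events"
      using fX gY by (auto simp: measurable_sets)
    fix a b assume "a \<in> ?SX" "b \<in> ?SY"
    then obtain A B where "A \<in> sets N" "B \<in> sets N"
      and ab: "a = ?X -` A \<inter> space M" "b = ?Y -` B \<inter> space M"
      by blast
    then have sets: "f -` A \<inter> space S \<in> sets S" "g -` B \<inter> space T \<in> sets T"
      using f g by (auto simp: measurable_sets)
    have "a = {\<omega>\<in>space M. X \<omega> \<in> f -` A \<inter> space S}" "b = {\<omega>\<in>space M. Y \<omega> \<in> g -` B \<inter> space T}"
      "a \<inter> b = {\<omega>\<in>space M. X \<omega> \<in> f -` A \<inter> space S \<and> Y \<omega> \<in> g -` B \<inter> space T}"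
      using ab measurable_space[OF X] measurable_space[OF Y] by auto
    then show "prob (a \<inter> b) = prob a * prob b"
      using rect[OF sets] by simp
  qed
  moreover have "(\<lambda>i. {case_bool ?X ?Y i -` A \<inter> space M | A. A \<in> sets (case_bool N N i)}) = case_bool ?SX ?SY"
    by (rule ext) (simp split: bool.split)
  ultimately show ?thesis
    unfolding indep_var_def indep_vars_def2 indep_set_def using fX gY by (auto split: bool.split)
qed

lemma prod_Basis_swap_Re_Im:
  fixes x :: "complex^'n"
  shows "(\<Prod>b\<in>Basis. (\<chi> j. Complex (Im (x $ j)) (Re (x $ j))) \<bullet> b) = (\<Prod>b\<in>Basis. x \<bullet> b)"
proof -
  define \<sigma> where "\<sigma> b = (\<chi> j. \<i> * cnj (b $ j))" for b :: "complex^'n"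
  have axis_cases: "\<exists>j e. b = axis j e \<and> e \<in> {1, \<i>}" if "b \<in> Basis" for b :: "complex^'n"
    using that by (auto simp: Basis_vec_def Basis_complex_def)
  have "\<sigma> b \<in> Basis" if "b \<in> Basis" for b
  proof -
    from axis_cases[OF that] obtain j e where "b = axis j e" "e \<in> {1, \<i>}"
      by blast
    then show ?thesis
      by (auto simp: \<sigma>_def Basis_vec_def Basis_complex_def axis_def vec_eq_iff intro!: exI[of _ j])
  qed
  moreover have "\<sigma> (\<sigma> b) = b" for b
    by (simp add: \<sigma>_def vec_eq_iff)
  ultimately have "bij_betw \<sigma> Basis Basis"
    by (intro bij_betw_byWitness[where f' = \<sigma>]) auto
  moreover have "(\<chi> j. Complex (Im (x $ j)) (Re (x $ j))) \<bullet> b = x \<bullet> \<sigma> b" if "b \<in> Basis" for b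
  proof -
    from axis_cases[OF that] obtain j e where "b = axis j e" "e \<in> {1, \<i>}"
      by blast
    moreover have "\<sigma> (axis j e) = axis j (\<i> * cnj e)"
      by (simp add: \<sigma>_def axis_def vec_eq_iff)
    ultimately show ?thesis
      by (auto simp: inner_axis inner_complex_def)
  qed
  ultimately show ?thesis
    using prod.reindex_bij_betw[of \<sigma> Basis Basis "\<lambda>b. x \<bullet> b"] by simp
qed

lemma lborel_distr_mult_ii: "distr lborel borel (\<lambda>y::complex^'n. \<i> *s y) = lborel"
proof (rule lborel_eqI[symmetric])
  fix l u :: "complex^'n"
  assume le: "\<And>b. b \<in> Basis \<Longrightarrow> l \<bullet> b \<le> u \<bullet> b"
  have mem_box: "x \<in> box a b \<longleftrightarrow> (\<forall>j. Re (a $ j) < Re (x $ j) \<and> Re (x $ j) < Re (b $ j)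
      \<and> Im (a $ j) < Im (x $ j) \<and> Im (x $ j) < Im (b $ j))" for a b x :: "complex^'n"
    by (auto simp: mem_box Basis_vec_def inner_axis Basis_complex_def inner_complex_def)
  define l' where "l' = (\<chi> j. Complex (Im (l $ j)) (- Re (u $ j)))"
  define u' where "u' = (\<chi> j. Complex (Im (u $ j)) (- Re (l $ j)))"
  have preimage: "(\<lambda>y. \<i> *s y) -` box l u = box l' u'"
    by (auto simp: mem_box l'_def u'_def; smt (verit))
  have "Re (l $ j) \<le> Re (u $ j)" "Im (l $ j) \<le> Im (u $ j)" for j
    using le[of "axis j 1"] le[of "axis j \<i>"]
    by (auto simp: Basis_vec_def inner_axis Basis_complex_def inner_complex_def)
  then have "\<forall>b\<in>Basis. l' \<bullet> b \<le> u' \<bullet> b"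
    by (auto simp: Basis_vec_def inner_axis Basis_complex_def inner_complex_def l'_def u'_def)
  moreover have "u' - l' = (\<chi> j. Complex (Im ((u - l) $ j)) (Re ((u - l) $ j)))"
    by (simp add: l'_def u'_def vec_eq_iff complex_eq_iff)
  then have "(\<Prod>b\<in>Basis. (u' - l') \<bullet> b) = (\<Prod>b\<in>Basis. (u - l) \<bullet> b)"
    by (simp only: prod_Basis_swap_Re_Im)
  ultimately show "emeasure (distr lborel borel (\<lambda>y. \<i> *s y)) (box l u) = (\<Prod>b\<in>Basis. (u - l) \<bullet> b)"
    by (simp add: emeasure_distr preimage emeasure_lborel_box_eq)
qed simp

lemma cgauss_pdf_mult_ii: "cgauss_pdf C (\<i> *s y) = cgauss_pdf C y"
proof -
  have "cnj (\<i> * a) * q * (\<i> * b) = cnj a * q * b" for a q b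
    by (simp add: algebra_simps)
  then show ?thesis
    by (simp add: cgauss_pdf_def)
qed

section \<open>The Fisher information of the model\<close>

locale source_noise_model = prob_space M
  for M :: "'a measure" +
  fixes s :: "'a \<Rightarrow> complex" and z :: "'a \<Rightarrow> complex^'n::finite"
    and ps :: "complex \<Rightarrow> real" and C :: "complex^'n^'n"
  assumes s_distributed: "distributed M lborel s (\<lambda>u. ennreal (ps u))"
    and ps_pos: "\<And>u. ps u > 0"
    and ps_differentiable: "\<And>u. ps differentiable (at u)"
    and regularity: "integrable lborel (\<lambda>u. wirt_conj (\<lambda>u. complex_of_real (ps u) * cnj u) u)"
      "(\<integral>u. wirt_conj (\<lambda>u. complex_of_real (ps u) * cnj u) u \<partial>lborel) = 0"
    and s_square_integrable: "integrable M (\<lambda>\<omega>. (cmod (s \<omega>))\<^sup>2)"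
    and psi_square_integrable: "integrable M (\<lambda>\<omega>. (cmod (psi ps (s \<omega>)))\<^sup>2)"
    and C_herm_pd: "herm_pd C"
    and z_distributed: "distributed M lborel z (\<lambda>y. ennreal (cgauss_pdf C y))"
    and C_covariance: "C = (\<chi> i j. \<integral>\<omega>. z \<omega> $ i * cnj (z \<omega> $ j) \<partial>M)"
    and s_z_independent: "\<And>A B. A \<in> sets borel \<Longrightarrow> B \<in> sets borel \<Longrightarrow>
      prob {\<omega>\<in>space M. s \<omega> \<in> A \<and> z \<omega> \<in> B}
        = prob {\<omega>\<in>space M. s \<omega> \<in> A} * prob {\<omega>\<in>space M. z \<omega> \<in> B}"
begin

abbreviation "\<sigma>2 \<equiv> \<integral>\<omega>. (cmod (s \<omega>))\<^sup>2 \<partial>M"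

abbreviation "\<kappa> \<equiv> \<integral>\<omega>. (cmod (psi ps (s \<omega>)))\<^sup>2 \<partial>M"

lemma s_measurable [measurable]: "s \<in> borel_measurable M"
  using distributed_measurable[OF s_distributed] by simp

lemma z_measurable [measurable]: "z \<in> borel_measurable M"
  using distributed_measurable[OF z_distributed] by simp

lemma psi_measurable [measurable]: "psi ps \<in> borel_measurable borel"
proof -
  define W where "W u = wirt_conj (\<lambda>u. complex_of_real (ps u) * cnj u) u" for u
  have W: "W \<in> borel_measurable borel"
    using borel_measurable_integrable[OF regularity(1)] unfolding W_def by simp
  have "continuous_on UNIV ps"
    using ps_differentiable
    by (intro differentiable_imp_continuous_on differentiable_at_imp_differentiable_on) auto
  then have ps: "(\<lambda>u. complex_of_real (ps u)) \<in> borel_measurable borel"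
    by (intro borel_measurable_continuous_onI continuous_intros)
  \<comment> \<open>off the origin, psi is recovered from the integrable, hence measurable, function W\<close>
  have "(of_real (ps u) - W u) / (of_real (ps u) * cnj u) = psi ps u" if "u \<noteq> 0" for u
  proof -
    have "complex_of_real (ps u) \<noteq> 0"
      using ps_pos[of u] by simp
    then show ?thesis
      unfolding W_def wirt_conj_density_times_cnj[OF ps_pos ps_differentiable]
      using that by (simp add: field_simps)
  qed
  then have psi_eq: "psi ps
      = (\<lambda>u. if u = 0 then psi ps 0 else (of_real (ps u) - W u) / (of_real (ps u) * cnj u))"
    by auto
  show ?thesis
    by (subst psi_eq)
      (auto intro!: measurable_If borel_measurable_divide borel_measurable_diff borel_measurable_times W ps
        borel_measurable_cnj)
qed

lemma expectation_cnj_s_psi: "(\<integral>\<omega>. cnj (s \<omega>) * psi ps (s \<omega>) \<partial>M) = 1"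
proof -
  have ps_nonneg: "\<And>u. 0 \<le> ps u"
    using ps_pos less_imp_le by blast
  have "(\<integral>u. complex_of_real (ps u) \<partial>lborel) = 1" and "integrable lborel (\<lambda>u. complex_of_real (ps u))"
    using distributed_integral_complex[OF s_distributed ps_nonneg, of "\<lambda>_. 1"] prob_space
    by (simp_all add: scaleR_conv_of_real)
  note density = this
  have "(\<integral>\<omega>. cnj (s \<omega>) * psi ps (s \<omega>) \<partial>M) = (\<integral>u. ps u *\<^sub>R (cnj u * psi ps u) \<partial>lborel)"
    by (rule distributed_integral_complex(1)[OF s_distributed ps_nonneg]) measurable
  also have "\<dots> = (\<integral>u. complex_of_real (ps u) - wirt_conj (\<lambda>u. complex_of_real (ps u) * cnj u) u \<partial>lborel)"
    unfolding wirt_conj_density_times_cnj[OF ps_pos ps_differentiable]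
    by (simp add: scaleR_conv_of_real algebra_simps)
  also have "\<dots> = 1"
    using density regularity by simp
  finally show ?thesis .
qed

lemma Re_det_C_pos: "Re (det C) > 0"
proof -
  have "emeasure lborel {y \<in> space lborel. ennreal (cgauss_pdf C y) \<noteq> 0} \<noteq> 0"
    by (rule distributed_imp_emeasure_nonzero[OF z_distributed])
  then obtain y where "cgauss_pdf C y > 0"
    by (metis (mono_tags, lifting) Collect_empty_eq emeasure_empty ennreal_eq_0_iff not_le)
  then show ?thesis
    by (simp add: cgauss_pdf_def zero_less_divide_iff zero_less_mult_iff)
qed

lemma cgauss_pdf_nonneg: "0 \<le> cgauss_pdf C y"
  using Re_det_C_pos by (simp add: cgauss_pdf_def)

lemma z_nth_square_integrable: "integrable M (\<lambda>\<omega>. (cmod (z \<omega> $ a))\<^sup>2)"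
proof -
  have "(\<integral>\<omega>. z \<omega> $ a * cnj (z \<omega> $ a) \<partial>M) = C $ a $ a"
    by (subst C_covariance) simp
  \<comment> \<open>a non-integrable function would have integral 0, but the diagonal of C is positive\<close>
  then have "integrable M (\<lambda>\<omega>. z \<omega> $ a * cnj (z \<omega> $ a))"
    using herm_pd_diag_pos[OF C_herm_pd, of a] not_integrable_integral_eq by fastforce
  then have "integrable M (\<lambda>\<omega>. Re (z \<omega> $ a * cnj (z \<omega> $ a)))"
    by (rule integrable_bounded_linear[OF bounded_linear_Re])
  then show ?thesis
    by (simp flip: complex_norm_square)
qed

lemma expectation_z_nth_mult: "(\<integral>\<omega>. z \<omega> $ a * z \<omega> $ b \<partial>M) = 0"
proof -
  define h where "h y = cgauss_pdf C y *\<^sub>R (y $ a * y $ b)" for y :: "complex^'n"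
  have "cgauss_pdf C \<in> borel_measurable borel"
    using distributed_real_measurable[OF _ z_distributed] cgauss_pdf_nonneg by simp
  then have h: "h \<in> borel_measurable borel"
    unfolding h_def by measurable
  have "integral\<^sup>L lborel h = integral\<^sup>L (distr lborel borel (\<lambda>y. \<i> *s y)) h"
    by (simp only: lborel_distr_mult_ii)
  also have "\<dots> = (\<integral>y. h (\<i> *s y) \<partial>lborel)"
    using h by (intro integral_distr) simp_all
  \<comment> \<open>circularity: the density is invariant under multiplication by i, which negates the integrand\<close>
  also have "\<dots> = (\<integral>y. - h y \<partial>lborel)"
    by (rule Bochner_Integration.integral_cong) (simp_all add: h_def cgauss_pdf_mult_ii algebra_simps)
  finally have "integral\<^sup>L lborel h = 0"
    by simp
  moreover have "(\<integral>\<omega>. z \<omega> $ a * z \<omega> $ b \<partial>M) = integral\<^sup>L lborel h"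
    unfolding h_def by (rule distributed_integral_complex(1)[OF z_distributed cgauss_pdf_nonneg]) measurable
  ultimately show ?thesis
    by simp
qed

lemma expectation_z_nth_mult_cnj: "(\<integral>\<omega>. z \<omega> $ a * cnj (z \<omega> $ b) \<partial>M) = C $ a $ b"
  by (subst C_covariance) simp

lemma integrable_z_nth_mult:
  "integrable M (\<lambda>\<omega>. z \<omega> $ a * z \<omega> $ b)" "integrable M (\<lambda>\<omega>. z \<omega> $ a * cnj (z \<omega> $ b))"
  by (auto intro!: integrable_mult_square_integrable z_nth_square_integrable)

lemma
  shows integrable_hdot_z_mult_cnj: "integrable M (\<lambda>\<omega>. hdot w (z \<omega>) * cnj (hdot v (z \<omega>)))"
    and expectation_hdot_z_mult_cnj: "(\<integral>\<omega>. hdot w (z \<omega>) * cnj (hdot v (z \<omega>)) \<partial>M) = hdot w (C *v v)"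
proof -
  have expand: "hdot w y * cnj (hdot v y) = (\<Sum>a\<in>UNIV. \<Sum>b\<in>UNIV. (cnj (w $ a) * v $ b) * (y $ a * cnj (y $ b)))"
    for y :: "complex^'n"
    by (simp add: hdot_def sum_distrib_left sum_distrib_right ac_simps)
  show "integrable M (\<lambda>\<omega>. hdot w (z \<omega>) * cnj (hdot v (z \<omega>)))"
    unfolding expand
    by (intro Bochner_Integration.integrable_sum Bochner_Integration.integrable_mult_right integrable_z_nth_mult)
  show "(\<integral>\<omega>. hdot w (z \<omega>) * cnj (hdot v (z \<omega>)) \<partial>M) = hdot w (C *v v)"
    unfolding expand
    by (simp add: integrable_z_nth_mult expectation_z_nth_mult_cnj hdot_def matrix_vector_mult_def
        sum_distrib_left ac_simps)
qed

lemma
  shows integrable_hdot_z_mult: "integrable M (\<lambda>\<omega>. hdot w (z \<omega>) * hdot v (z \<omega>))"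
    and expectation_hdot_z_mult: "(\<integral>\<omega>. hdot w (z \<omega>) * hdot v (z \<omega>) \<partial>M) = 0"
proof -
  have expand: "hdot w y * hdot v y = (\<Sum>a\<in>UNIV. \<Sum>b\<in>UNIV. (cnj (w $ a) * cnj (v $ b)) * (y $ a * y $ b))"
    for y :: "complex^'n"
    by (simp add: hdot_def sum_distrib_left sum_distrib_right ac_simps)
  show "integrable M (\<lambda>\<omega>. hdot w (z \<omega>) * hdot v (z \<omega>))"
    unfolding expand
    by (intro Bochner_Integration.integrable_sum Bochner_Integration.integrable_mult_right integrable_z_nth_mult)
  show "(\<integral>\<omega>. hdot w (z \<omega>) * hdot v (z \<omega>) \<partial>M) = 0"
    unfolding expand by (simp add: integrable_z_nth_mult expectation_z_nth_mult)
qed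

lemma expectation_indep_mult:
  fixes f :: "complex \<Rightarrow> complex" and g :: "complex^'n \<Rightarrow> complex"
  assumes "f \<in> borel_measurable borel" and "g \<in> borel_measurable borel"
    and "integrable M (\<lambda>\<omega>. f (s \<omega>))" and "integrable M (\<lambda>\<omega>. g (z \<omega>))"
  shows "(\<integral>\<omega>. f (s \<omega>) * g (z \<omega>) \<partial>M) = (\<integral>\<omega>. f (s \<omega>) \<partial>M) * (\<integral>\<omega>. g (z \<omega>) \<partial>M)"
proof -
  have "indep_var borel (\<lambda>\<omega>. f (s \<omega>)) borel (\<lambda>\<omega>. g (z \<omega>))"
    using assms(1,2) by (intro indep_var_compose_rectI s_z_independent) simp_all
  then show ?thesis
    using indep_var_lebesgue_integral assms(3,4) by blast
qed

lemma src_score_measurable [measurable]: "src_score ps i \<in> borel_measurable borel"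
  by (cases i; simp add: src_score_def[abs_def]; measurable)

lemma integrable_src_score_mult:
  "integrable M (\<lambda>\<omega>. src_score ps i (s \<omega>) * src_score ps j (s \<omega>))"
  "integrable M (\<lambda>\<omega>. src_score ps i (s \<omega>) * cnj (src_score ps j (s \<omega>)))"
proof -
  have sq: "integrable M (\<lambda>\<omega>. (cmod (src_score ps i (s \<omega>)))\<^sup>2)" for i
    by (cases i) (simp_all add: src_score_def s_square_integrable psi_square_integrable)
  then show "integrable M (\<lambda>\<omega>. src_score ps i (s \<omega>) * src_score ps j (s \<omega>))"
    "integrable M (\<lambda>\<omega>. src_score ps i (s \<omega>) * cnj (src_score ps j (s \<omega>)))"
    by (auto intro!: integrable_mult_square_integrable sq)
qed

lemma src_score_moments:
  "(\<integral>\<omega>. src_score ps (Inl k) (s \<omega>) * cnj (src_score ps (Inl l) (s \<omega>)) \<partial>M)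
     = of_real \<kappa>"
  "(\<integral>\<omega>. src_score ps (Inl k) (s \<omega>) * cnj (src_score ps (Inr l) (s \<omega>)) \<partial>M) = -1"
  "(\<integral>\<omega>. src_score ps (Inr k) (s \<omega>) * cnj (src_score ps (Inl l) (s \<omega>)) \<partial>M) = -1"
  "(\<integral>\<omega>. src_score ps (Inr k) (s \<omega>) * cnj (src_score ps (Inr l) (s \<omega>)) \<partial>M)
     = of_real \<sigma>2"
proof -
  have "(\<integral>\<omega>. s \<omega> * cnj (psi ps (s \<omega>)) \<partial>M) = 1"
    using Bochner_Integration.integral_cnj[of M "\<lambda>\<omega>. cnj (s \<omega>) * psi ps (s \<omega>)"] expectation_cnj_s_psi by simp
  then show
    "(\<integral>\<omega>. src_score ps (Inl k) (s \<omega>) * cnj (src_score ps (Inr l) (s \<omega>)) \<partial>M) = -1"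
    "(\<integral>\<omega>. src_score ps (Inr k) (s \<omega>) * cnj (src_score ps (Inl l) (s \<omega>)) \<partial>M) = -1"
    using expectation_cnj_s_psi by (simp_all add: src_score_def mult.commute)
  show "(\<integral>\<omega>. src_score ps (Inl k) (s \<omega>) * cnj (src_score ps (Inl l) (s \<omega>)) \<partial>M)
     = of_real \<kappa>"
    "(\<integral>\<omega>. src_score ps (Inr k) (s \<omega>) * cnj (src_score ps (Inr l) (s \<omega>)) \<partial>M)
     = of_real \<sigma>2"
    using integral_mult_cnj_self[where f = "\<lambda>\<omega>. psi ps (s \<omega>)"] integral_mult_cnj_self[where f = s]
    by (simp_all add: src_score_def mult.commute)
qed

lemma matrix_inv_C: "C ** matrix_inv C = mat 1" "matrix_inv C ** C = mat 1" "hermitian (matrix_inv C)"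
  using invertible_matrix_inv herm_pd_invertible hermitian_matrix_inv herm_pd_hermitian C_herm_pd
  by blast+

lemma wgrad_loglik_mixA:
  "wgrad (\<lambda>t. loglik ps (cgauss_pdf C) t (mixA 0 g0 (s \<omega>) (z \<omega>))) (theta 0 g0)
     = (\<chi> i. src_score ps i (s \<omega>) * hdot (noise_dir (matrix_inv C) i) (z \<omega>))"
  by (simp add: vec_eq_iff wgrad_loglik_at_true ps_pos ps_differentiable Re_det_C_pos matrix_inv_C)

lemma expectation_score_mult_cnj:
  "(\<integral>\<omega>. src_score ps i (s \<omega>) * hdot w (z \<omega>) * cnj (src_score ps j (s \<omega>) * hdot v (z \<omega>)) \<partial>M)
    = (\<integral>\<omega>. src_score ps i (s \<omega>) * cnj (src_score ps j (s \<omega>)) \<partial>M) * hdot w (C *v v)"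
  (is "?lhs = _")
proof -
  have "?lhs = (\<integral>\<omega>. src_score ps i (s \<omega>) * cnj (src_score ps j (s \<omega>))
      * (hdot w (z \<omega>) * cnj (hdot v (z \<omega>))) \<partial>M)"
    by (simp add: ac_simps)
  then show ?thesis
    using expectation_indep_mult[of "\<lambda>u. src_score ps i u * cnj (src_score ps j u)"
        "\<lambda>y. hdot w y * cnj (hdot v y)"]
    by (simp add: integrable_src_score_mult integrable_hdot_z_mult_cnj expectation_hdot_z_mult_cnj)
qed

lemma expectation_score_mult:
  "(\<integral>\<omega>. src_score ps i (s \<omega>) * hdot w (z \<omega>) * (src_score ps j (s \<omega>) * hdot v (z \<omega>)) \<partial>M) = 0"
  (is "?lhs = _")
proof -
  have "?lhs = (\<integral>\<omega>. src_score ps i (s \<omega>) * src_score ps j (s \<omega>) * (hdot w (z \<omega>) * hdot v (z \<omega>)) \<partial>M)"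
    by (simp add: ac_simps)
  then show ?thesis
    using expectation_indep_mult[of "\<lambda>u. src_score ps i u * src_score ps j u" "\<lambda>y. hdot w y * hdot v y"]
    by (simp add: integrable_src_score_mult integrable_hdot_z_mult expectation_hdot_z_mult)
qed

lemma fisherF_at_true:
  "fisherF M ps (cgauss_pdf C) (theta 0 g0) (\<lambda>\<omega>. mixA 0 g0 (s \<omega>) (z \<omega>))
     = block_matrix (\<kappa> *\<^sub>R C) (- mat 1) (- mat 1) (\<sigma>2 *\<^sub>R matrix_inv C)"
proof -
  have "(\<integral>\<omega>. src_score ps i (s \<omega>) * cnj (src_score ps j (s \<omega>)) \<partial>M)
      * block_matrix C (mat 1) (mat 1) (matrix_inv C) $ i $ j
    = block_matrix (\<kappa> *\<^sub>R C) (- mat 1) (- mat 1) (\<sigma>2 *\<^sub>R matrix_inv C) $ i $ j" for i j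
    by (cases i; cases j) (simp_all add: src_score_moments scaleR_conv_of_real[where 'a = complex] mat_def)
  then show ?thesis
    unfolding fisherF_def wgrad_loglik_mixA vec_lambda_beta expectation_score_mult_cnj
    by (simp add: vec_eq_iff noise_dir_gram matrix_inv_C)
qed

lemma fisherP_at_true:
  "fisherP M ps (cgauss_pdf C) (theta 0 g0) (\<lambda>\<omega>. mixA 0 g0 (s \<omega>) (z \<omega>)) = 0"
  unfolding fisherP_def wgrad_loglik_mixA vec_lambda_beta expectation_score_mult
  by (simp add: vec_eq_iff)

lemma crlb_h_at_true:
  assumes "N > 0" and "\<kappa> * \<sigma>2 \<noteq> 1"
  shows "crlb_h N (cfim TYPE('n + 'n)
      (fisherF M ps (cgauss_pdf C) (theta 0 g0) (\<lambda>\<omega>. mixA 0 g0 (s \<omega>) (z \<omega>)))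
      (fisherP M ps (cgauss_pdf C) (theta 0 g0) (\<lambda>\<omega>. mixA 0 g0 (s \<omega>) (z \<omega>))))
    = (1 / real N * (\<sigma>2 / (\<kappa> * \<sigma>2 - 1))) *\<^sub>R matrix_inv C"
  unfolding fisherF_at_true fisherP_at_true
    crlb_h_circular[OF block_matrix_inverse[OF matrix_inv_C(1,2) assms(2)] assms(1)]
  by (simp add: vec_eq_iff scaleR_conv_of_real[where 'a = complex])

end

theorem mainTheorem2:
  fixes M :: "'a measure"
    and s :: "'a \<Rightarrow> complex"
    and z :: "'a \<Rightarrow> complex^'n"
    and ps :: "complex \<Rightarrow> real"
    and C :: "complex^'n^'n"
    and g0 :: "complex^'n"
    and N :: nat
  assumes prob: "prob_space M"
    and s_dens: "distributed M lborel s (\<lambda>u. ennreal (ps u))"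
    and ps_pos: "\<forall>u. ps u > 0"
    and ps_diff: "\<forall>u. ps differentiable (at u)"
    and reg: "integrable lborel (\<lambda>u. wirt_conj (\<lambda>u. complex_of_real (ps u) * cnj u) u)"
             "integral\<^sup>L lborel (\<lambda>u. wirt_conj (\<lambda>u. complex_of_real (ps u) * cnj u) u) = 0"
    and s_sq: "integrable M (\<lambda>\<omega>. (cmod (s \<omega>))\<^sup>2)"
    and s_mean: "integral\<^sup>L M s = 0"
    and psi_sq: "integrable M (\<lambda>\<omega>. (cmod (psi ps (s \<omega>)))\<^sup>2)"
    and C_pd: "herm_pd C"
    and z_gauss: "distributed M lborel z (\<lambda>y. ennreal (cgauss_pdf C y))"
    and C_cov: "C = (\<chi> i j. integral\<^sup>L M (\<lambda>\<omega>. z \<omega> $ i * cnj (z \<omega> $ j)))"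
    and indep: "\<forall>A\<in>sets (borel :: complex measure). \<forall>B\<in>sets (borel :: (complex^'n) measure).
        measure M ({\<omega>\<in>space M. s \<omega> \<in> A \<and> z \<omega> \<in> B}) =
        measure M ({\<omega>\<in>space M. s \<omega> \<in> A}) * measure M ({\<omega>\<in>space M. z \<omega> \<in> B})"
    and N_pos: "N > 0"
    and kappa_gt: "integral\<^sup>L M (\<lambda>\<omega>. (cmod (s \<omega>))\<^sup>2) * integral\<^sup>L M (\<lambda>\<omega>. (cmod (psi ps (s \<omega>)))\<^sup>2) > 1"
  shows "let \<sigma>2 = integral\<^sup>L M (\<lambda>\<omega>. (cmod (s \<omega>))\<^sup>2);
             \<kappa> = integral\<^sup>L M (\<lambda>\<omega>. (cmod (psi ps (s \<omega>)))\<^sup>2);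
             t0 = theta 0 g0;
             X = (\<lambda>\<omega>. mixA 0 g0 (s \<omega>) (z \<omega>));
             J = cfim TYPE('n + 'n) (fisherF M ps (cgauss_pdf C) t0 X) (fisherP M ps (cgauss_pdf C) t0 X);
             CR = crlb_h N J
         in CR = (\<chi> i j. complex_of_real (1 / real N * (\<sigma>2 / (\<kappa> * \<sigma>2 - 1))) * matrix_inv C $ i $ j)
          \<and> trace (C ** CR) / complex_of_real \<sigma>2
              = complex_of_real (1 / real N * (real CARD('n) / (\<sigma>2 * \<kappa> - 1)))"
proof -
  have "source_noise_model M s z ps C"
    by (intro source_noise_model.intro source_noise_model_axioms.intro prob s_dens reg s_sq psi_sq
        C_pd z_gauss C_cov) (use ps_pos ps_diff indep in auto)
  then interpret source_noise_model M s z ps C .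
  have "\<kappa> * \<sigma>2 > 1"
    using kappa_gt by (simp only: mult.commute)
  then have "\<kappa> * \<sigma>2 \<noteq> 1" and "\<sigma>2 \<noteq> 0"
    by auto
  have "1 / real N * (\<sigma>2 / (\<kappa> * \<sigma>2 - 1)) * real CARD('n) / \<sigma>2
      = 1 / real N * (real CARD('n) / (\<sigma>2 * \<kappa> - 1))"
    using \<open>\<sigma>2 \<noteq> 0\<close> by (simp add: mult.commute)
  then show ?thesis
    unfolding Let_def crlb_h_at_true[OF N_pos \<open>\<kappa> * \<sigma>2 \<noteq> 1\<close>]
      trace_mult_scaleR_inverse[OF matrix_inv_C(1)]
    by (simp add: vec_eq_iff scaleR_conv_of_real[where 'a = complex] flip: of_real_divide)
qed

end
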